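(* Let $F$ be a distribution function on $[0,1]$ with a positive, non-increasing, differentiable density $g$ and non-decreasing hazard ratio $g(x)/(1-F(x))$. Let $\{f_{i,j}\}$, $f_{i,j}=f_{j,i}$ ($1\le i\le j\le n$), be independent with distribution $F$. Call $I\subseteq[n]$ a K-set if $f_{i,j}\ge (f_{i,i}+f_{j,j})/2$ for all distinct $i,j\in I$. Say that $J\subseteq[n]$, $|J|\ge2$, supports a non-trivial local equilibrium if there exist $p_j>0$ ($j\in J$) with $\sum_{j\in J}p_j=1$ such that $\sum_{j\in J}f_{i,j}p_j$ is the same for all $i\in J$, and $\sum_{i,j\in J}f_{i,j}x_ix_j\le0$ for all real $\{x_i\}_{i\in J}$ with $\sum_{i\in J}x_i=0$. Let $r_n=\lceil 2\log_2 n\rceil$. Then for every $a>0$, for all sufficiently large $n$, with probability at least $1-n^{-a}$ there is no K-set $I$ of cardinality $\ge r_n$ such that no proper subset $J\subsetneq I$ with $|J|\ge2$ supports a non-trivial local equilibrium. *)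

theory Defs
  imports "HOL-Probability.Probability"
begin

definition cdf_of :: "(real \<Rightarrow> real) \<Rightarrow> real \<Rightarrow> real" where
  "cdf_of g x = integral {0..x} g"

text \<open>Index set of the independent entries f(i,j), i \<le> j, indices 0..n-1.\<close>
definition entry_idx :: "nat \<Rightarrow> (nat \<times> nat) set" where
  "entry_idx n = {(i, j). i \<le> j \<and> j < n}"

definition entries_space :: "(real \<Rightarrow> real) \<Rightarrow> nat \<Rightarrow> (nat \<times> nat \<Rightarrow> real) measure" where
  "entries_space g n = PiM (entry_idx n) (\<lambda>_. density lborel (\<lambda>x. ennreal (g x)))"

definition sym_mat :: "(nat \<times> nat \<Rightarrow> real) \<Rightarrow> nat \<Rightarrow> nat \<Rightarrow> real" where
  "sym_mat \<omega> i j = \<omega> (min i j, max i j)"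

definition is_Kset :: "(nat \<Rightarrow> nat \<Rightarrow> real) \<Rightarrow> nat set \<Rightarrow> bool" where
  "is_Kset f I \<longleftrightarrow> (\<forall>i\<in>I. \<forall>j\<in>I. i \<noteq> j \<longrightarrow> f i j \<ge> (f i i + f j j) / 2)"

definition supports_local_eq :: "(nat \<Rightarrow> nat \<Rightarrow> real) \<Rightarrow> nat set \<Rightarrow> bool" where
  "supports_local_eq f J \<longleftrightarrow> card J \<ge> 2 \<and>
     (\<exists>p :: nat \<Rightarrow> real. (\<forall>j\<in>J. p j > 0) \<and> (\<Sum>j\<in>J. p j) = 1 \<and>
        (\<exists>c. \<forall>i\<in>J. (\<Sum>j\<in>J. f i j * p j) = c) \<and>
        (\<forall>x :: nat \<Rightarrow> real. (\<Sum>i\<in>J. x i) = 0 \<longrightarrow>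
            (\<Sum>i\<in>J. \<Sum>j\<in>J. f i j * x i * x j) \<le> 0))"

definition r_n :: "nat \<Rightarrow> nat" where
  "r_n n = nat \<lceil>2 * log 2 (real n)\<rceil>"

definition bad_event :: "(real \<Rightarrow> real) \<Rightarrow> nat \<Rightarrow> (nat \<times> nat \<Rightarrow> real) set" where
  "bad_event g n = {\<omega> \<in> space (entries_space g n).
     \<exists>I \<subseteq> {0..<n}. card I \<ge> r_n n \<and> is_Kset (sym_mat \<omega>) I \<and>
        (\<forall>J. J \<subset> I \<and> card J \<ge> 2 \<longrightarrow> \<not> supports_local_eq (sym_mat \<omega>) J)}"

end

theory Submission
  imports Defs
begin

(* If no pair {i, j} of a K-set supports a local equilibrium, then f_ij cannot exceed both
   f_ii and f_jj (such a pair always supports one), so together with the K-set inequality every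
   off-diagonal entry lies in the upper half [(f_ii + f_jj)/2, max f_ii f_jj] of the interval
   spanned by the two diagonal entries.  Given the diagonal, these C(r,2) events are independent,
   and each has probability at most 1/2 because a non-increasing density puts no more mass on the
   upper half of an interval than on the lower half.  A union bound over the r-subsets of [n]
   gives C(n,r) 2^-C(r,2) <= 2^(r/2) / r! for r >= 2 log2 n, which is eventually below n^-a. *)

lemma borel_measurable_antimono_on_vanishing_outside:
  fixes g :: "real \<Rightarrow> real"
  assumes antimono: "antimono_on {a..b} g" and outside: "\<And>x. x \<notin> {a..b} \<Longrightarrow> g x = 0"
  shows "g \<in> borel_measurable borel"
proof -
  have "(\<lambda>x. - g x) \<in> borel_measurable borel"
  proof (rule borel_measurable_piecewise_mono[of "{{..<a}, {a..b}, {b<..}}"])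
    show "mono_on c (\<lambda>x. - g x)" if "c \<in> {{..<a}, {a..b}, {b<..}}" for c
      using that antimono outside by (auto simp: monotone_on_def)
  qed auto
  then show ?thesis
    by simp
qed

lemma prob_space_density_01:
  fixes g :: "real \<Rightarrow> real"
  assumes outside: "\<And>x. x \<notin> {0..1} \<Longrightarrow> g x = 0"
    and pos: "\<And>x. x \<in> {0<..<1} \<Longrightarrow> g x > 0"
    and integral: "(g has_integral 1) {0..1}"
    and antimono: "antimono_on {0..1} g"
  shows "prob_space (density lborel (\<lambda>x. ennreal (g x)))"
proof (rule prob_spaceI)
  have g_borel: "g \<in> borel_measurable borel"
    using borel_measurable_antimono_on_vanishing_outside antimono outside by blast
  have "g 0 \<ge> g (1/2)"
    using antimono by (auto simp: monotone_on_def)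
  then have nonneg: "0 \<le> g x" if "x \<in> {0..1} - {1}" for x
    using that pos[of x] pos[of "1/2"] by (cases "x = 0") auto
  \<comment> \<open>Only the value g 1 may be negative; it is irrelevant for the integral.\<close>
  have "((\<lambda>x. max 0 (g x)) has_integral 1) {0..1}"
    by (rule has_integral_spike[OF negligible_sing[of 1] _ integral]) (use nonneg in auto)
  then have "(\<integral>\<^sup>+x. ennreal (max 0 (g x)) * indicator {0..1} x \<partial>lborel) = 1"
    by (subst nn_integral_has_integral_lebesgue') auto
  moreover have "ennreal (max 0 (g x)) * indicator {0..1} x = ennreal (g x)" for x
    by (auto simp: indicator_def outside max_def ennreal_neg)
  ultimately show "emeasure (density lborel (\<lambda>x. ennreal (g x))) (space (density lborel (\<lambda>x. ennreal (g x)))) = 1"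
    using g_borel by (simp add: emeasure_density)
qed

lemma emeasure_density_upper_half_le_lower_half:
  fixes g :: "real \<Rightarrow> real"
  assumes g_borel: "g \<in> borel_measurable borel" and antimono: "antimono_on {u..v} g"
  defines "m \<equiv> (u + v) / 2"
  shows "emeasure (density lborel (\<lambda>x. ennreal (g x))) {m..v}
    \<le> emeasure (density lborel (\<lambda>x. ennreal (g x))) {u..m}"
proof -
  have "emeasure (density lborel (\<lambda>x. ennreal (g x))) {m..v}
      = (\<integral>\<^sup>+x. ennreal (g x) * indicator {m..v} x \<partial>lborel)"
    using g_borel by (simp add: emeasure_density)
  \<comment> \<open>Translate {m..v} onto {u..m}; the density can only grow.\<close>
  also have "\<dots> = (\<integral>\<^sup>+x. ennreal (g (m - u + x)) * indicator {m..v} (m - u + x) \<partial>lborel)"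
    using nn_integral_real_affine[of "\<lambda>x. ennreal (g x) * indicator {m..v} x" 1 "m - u"] g_borel
    by simp
  also have "\<dots> \<le> (\<integral>\<^sup>+x. ennreal (g x) * indicator {u..m} x \<partial>lborel)"
  proof (intro nn_integral_mono)
    fix x
    show "ennreal (g (m - u + x)) * indicator {m..v} (m - u + x) \<le> ennreal (g x) * indicator {u..m} x"
    proof (cases "m - u + x \<in> {m..v}")
      case True
      then have "x \<in> {u..m}" and "g (m - u + x) \<le> g x"
        using antimono by (auto simp: m_def monotone_on_def field_simps)
      then show ?thesis
        using True by (auto intro: ennreal_leI)
    qed auto
  qed
  also have "\<dots> = emeasure (density lborel (\<lambda>x. ennreal (g x))) {u..m}"
    using g_borel by (simp add: emeasure_density)
  finally show ?thesis .
qed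

\<comment> \<open>The guard u, v \<in> [0,1] makes the bound 1/2 hold for all u, v; diagonal entries outside
  [0,1] have probability zero and are handled separately.\<close>
definition upper_half :: "real \<Rightarrow> real \<Rightarrow> real set" where
  "upper_half u v = (if u \<in> {0..1} \<and> v \<in> {0..1} then {(u + v) / 2..max u v} else {})"

lemma upper_half_in_borel [measurable]: "upper_half u v \<in> sets borel"
  by (simp add: upper_half_def)

lemma mem_upper_half_iff:
  "w \<in> upper_half u v \<longleftrightarrow> u \<in> {0..1} \<and> v \<in> {0..1} \<and> (u + v) / 2 \<le> w \<and> w \<le> max u v"
  by (auto simp: upper_half_def)

definition offdiag_pairs :: "nat set \<Rightarrow> (nat \<times> nat) set" where
  "offdiag_pairs I = {(i, j). i \<in> I \<and> j \<in> I \<and> i < j}"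

lemma finite_offdiag_pairs: "finite I \<Longrightarrow> finite (offdiag_pairs I)"
  unfolding offdiag_pairs_def by (rule finite_subset[of _ "I \<times> I"]) auto

lemma card_offdiag_pairs:
  assumes "finite I"
  shows "card (offdiag_pairs I) = card I choose 2"
proof -
  have "bij_betw (\<lambda>(i, j). {i, j}) (offdiag_pairs I) {A. A \<subseteq> I \<and> card A = 2}"
  proof (rule bij_betw_byWitness[where f' = "\<lambda>A. (Min A, Max A)"])
    show "\<forall>A \<in> {A. A \<subseteq> I \<and> card A = 2}. (\<lambda>(i, j). {i, j}) (Min A, Max A) = A"
      by (auto simp: card_2_iff min_def max_def insert_commute split: if_splits)
  qed (auto simp: offdiag_pairs_def card_2_iff min_def max_def split: if_splits)
  then show ?thesis
    using n_subsets[OF assms, of 2] by (simp add: bij_betw_same_card)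
qed

lemma sets_Collect_upper_half:
  assumes [measurable]: "u \<in> borel_measurable N" "v \<in> borel_measurable N" "w \<in> borel_measurable N"
  shows "{x \<in> space N. w x \<in> upper_half (u x) (v x)} \<in> sets N"
  unfolding mem_upper_half_iff atLeastAtMost_iff by measurable

definition upper_half_event :: "nat set \<Rightarrow> (nat \<times> nat \<Rightarrow> real) set" where
  "upper_half_event I = {\<omega>. \<forall>(i, j) \<in> offdiag_pairs I. \<omega> (i, j) \<in> upper_half (\<omega> (i, i)) (\<omega> (j, j))}"

lemma upper_half_event_sets:
  fixes M :: "real measure"
  assumes sets_M: "sets M = sets borel" and "finite I"
    and in_K: "\<And>i j. i \<in> I \<Longrightarrow> j \<in> I \<Longrightarrow> i \<le> j \<Longrightarrow> (i, j) \<in> K"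
  shows "space (PiM K (\<lambda>_. M)) \<inter> upper_half_event I \<in> sets (PiM K (\<lambda>_. M))"
proof -
  have "{\<omega> \<in> space (PiM K (\<lambda>_. M)). \<omega> (i, j) \<in> upper_half (\<omega> (i, i)) (\<omega> (j, j))} \<in> sets (PiM K (\<lambda>_. M))"
    if "(i, j) \<in> offdiag_pairs I" for i j
  proof -
    have "(\<lambda>\<omega>. \<omega> k) \<in> borel_measurable (PiM K (\<lambda>_. M))" if "k \<in> {(i, i), (j, j), (i, j)}" for k
      using measurable_component_singleton[of k K "\<lambda>_. M"] that in_K \<open>(i, j) \<in> offdiag_pairs I\<close> sets_M
      by (auto simp: offdiag_pairs_def cong: measurable_cong_sets)
    then show ?thesis
      by (intro sets_Collect_upper_half) auto
  qed
  then show ?thesis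
    using finite_offdiag_pairs[OF \<open>finite I\<close>]
    by (auto simp: upper_half_event_def Int_def Ball_def case_prod_beta intro!: sets.sets_Collect_finite_All)
qed

lemma emeasure_PiM_Collect_le_power:
  assumes prob: "prob_space M" and "finite P" "P \<subseteq> J"
    and sets: "\<And>p. p \<in> P \<Longrightarrow> X p \<in> sets M" and le: "\<And>p. p \<in> P \<Longrightarrow> measure M (X p) \<le> c"
  shows "emeasure (PiM J (\<lambda>_. M)) {y \<in> space (PiM J (\<lambda>_. M)). \<forall>p\<in>P. y p \<in> X p} \<le> ennreal (c ^ card P)"
proof -
  interpret product_prob_space "\<lambda>_. M" J
    by (intro product_prob_spaceI prob)
  have "emeasure (PiM J (\<lambda>_. M)) {y \<in> space (PiM J (\<lambda>_. M)). \<forall>p\<in>P. y p \<in> X p}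
      = ennreal (\<Prod>p\<in>P. measure M (X p))"
    using assms by (simp add: emeasure_PiM_Collect M.emeasure_eq_measure prod_ennreal)
  also have "\<dots> \<le> ennreal (c ^ card P)"
    using le by (intro ennreal_leI) (simp add: prod_mono[where g = "\<lambda>_. c", simplified])
  finally show ?thesis .
qed

lemma measure_upper_half_event_le:
  fixes M :: "real measure"
  assumes prob: "prob_space M" and sets_M: "sets M = sets borel" and "finite K" "finite I"
    and in_K: "\<And>i j. i \<in> I \<Longrightarrow> j \<in> I \<Longrightarrow> i \<le> j \<Longrightarrow> (i, j) \<in> K"
    and half: "\<And>u v. measure M (upper_half u v) \<le> c"
  shows "measure (PiM K (\<lambda>_. M)) (space (PiM K (\<lambda>_. M)) \<inter> upper_half_event I)
    \<le> c ^ card (offdiag_pairs I)"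
proof -
  interpret product_prob_space "\<lambda>_. M" K
    by (intro product_prob_spaceI prob)
  define E where "E = space (PiM K (\<lambda>_. M)) \<inter> upper_half_event I"
  define P where "P = offdiag_pairs I"
  define D where "D = (\<lambda>i. (i, i)) ` I"
  define J where "J = K - D"
  have K_eq: "K = D \<union> J" and "D \<inter> J = {}" and "finite D" "finite J" and "P \<subseteq> J"
    using in_K \<open>finite K\<close> \<open>finite I\<close> by (auto simp: D_def J_def P_def offdiag_pairs_def)
  have "c \<ge> 0"
    using half[of 0 0] measure_nonneg[of M "upper_half 0 0"] by linarith
  have E_sets: "E \<in> sets (PiM K (\<lambda>_. M))"
    unfolding E_def using sets_M \<open>finite I\<close> in_K by (rule upper_half_event_sets)
  \<comment> \<open>Condition on the diagonal entries: given them, the off-diagonal events are independent.\<close>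
  have "emeasure (PiM K (\<lambda>_. M)) E
      = (\<integral>\<^sup>+x. \<integral>\<^sup>+y. indicator E (merge D J (x, y)) \<partial>PiM J (\<lambda>_. M) \<partial>PiM D (\<lambda>_. M))"
    using E_sets \<open>D \<inter> J = {}\<close> \<open>finite D\<close> \<open>finite J\<close> unfolding K_eq
    by (subst product_nn_integral_fold[symmetric]) auto
  also have "\<dots> \<le> (\<integral>\<^sup>+x. ennreal (c ^ card P) \<partial>PiM D (\<lambda>_. M))"
  proof (intro nn_integral_mono)
    fix x
    define B where "B = {y \<in> space (PiM J (\<lambda>_. M)).
      \<forall>p\<in>P. y p \<in> upper_half (x (fst p, fst p)) (x (snd p, snd p))}"
    have "(\<integral>\<^sup>+y. indicator E (merge D J (x, y)) \<partial>PiM J (\<lambda>_. M)) \<le> (\<integral>\<^sup>+y. indicator B y \<partial>PiM J (\<lambda>_. M))"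
    proof (intro nn_integral_mono)
      fix y assume y: "y \<in> space (PiM J (\<lambda>_. M))"
      have "merge D J (x, y) p = y p" if "p \<in> P" for p
        using that \<open>P \<subseteq> J\<close> by (auto simp: merge_def D_def P_def offdiag_pairs_def)
      moreover have "merge D J (x, y) (i, i) = x (i, i)" if "i \<in> I" for i
        using that by (simp add: merge_def D_def)
      ultimately have "y \<in> B" if "merge D J (x, y) \<in> E"
        using that y by (auto simp: B_def E_def P_def upper_half_event_def offdiag_pairs_def)
      then show "indicator E (merge D J (x, y)) \<le> (indicator B y :: ennreal)"
        by (auto simp: indicator_def)
    qed
    also have "\<dots> = emeasure (PiM J (\<lambda>_. M)) B"
      using \<open>P \<subseteq> J\<close> finite_offdiag_pairs[OF \<open>finite I\<close>] sets_M
      by (intro nn_integral_indicator) (auto simp: B_def P_def intro!: sets.sets_Collect_finite_All)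
    also have "\<dots> \<le> ennreal (c ^ card P)"
      unfolding B_def using \<open>P \<subseteq> J\<close> finite_offdiag_pairs[OF \<open>finite I\<close>] sets_M half
      by (intro emeasure_PiM_Collect_le_power[OF prob]) (auto simp: P_def)
    finally show "(\<integral>\<^sup>+y. indicator E (merge D J (x, y)) \<partial>PiM J (\<lambda>_. M)) \<le> ennreal (c ^ card P)" .
  qed
  also have "\<dots> = ennreal (c ^ card P)"
    using prob_space_PiM[of D "\<lambda>_. M"] prob by (simp add: prob_space.emeasure_space_1)
  finally show ?thesis
    using \<open>c \<ge> 0\<close> by (simp add: E_def P_def P.emeasure_eq_measure)
qed

lemma supports_local_eq_pair:
  fixes f :: "nat \<Rightarrow> nat \<Rightarrow> real"
  assumes "i \<noteq> j" and sym: "f j i = f i j" and "f i i < f i j" "f j j < f i j"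
  shows "supports_local_eq f {i, j}"
proof -
  define a where "a = f i j - f i i"
  define b where "b = f i j - f j j"
  have "a > 0" "b > 0"
    using assms by (simp_all add: a_def b_def)
  define p where "p k = (if k = i then b else a) / (a + b)" for k
  have pos: "\<forall>k\<in>{i, j}. p k > 0"
    using \<open>a > 0\<close> \<open>b > 0\<close> by (simp add: p_def)
  have sum: "(\<Sum>k\<in>{i, j}. p k) = 1"
    using \<open>i \<noteq> j\<close> \<open>a > 0\<close> \<open>b > 0\<close> by (simp add: p_def add_divide_distrib[symmetric])
  \<comment> \<open>Weights proportional to (b, a) equalise the two payoffs.\<close>
  have "f i j * b + f j j * a = f i i * b + f i j * a"
    by (simp add: a_def b_def algebra_simps)
  moreover have "(\<Sum>l\<in>{i, j}. f i l * p l) = (f i i * b + f i j * a) / (a + b)"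
    and "(\<Sum>l\<in>{i, j}. f j l * p l) = (f i j * b + f j j * a) / (a + b)"
    using \<open>i \<noteq> j\<close> sym by (simp_all add: p_def add_divide_distrib)
  ultimately have equal: "\<exists>c. \<forall>k\<in>{i, j}. (\<Sum>l\<in>{i, j}. f k l * p l) = c"
    by auto
  have neg: "(\<Sum>k\<in>{i, j}. \<Sum>l\<in>{i, j}. f k l * x k * x l) \<le> 0" if "(\<Sum>k\<in>{i, j}. x k) = 0" for x
  proof -
    have "x j = - x i"
      using that \<open>i \<noteq> j\<close> by simp
    then have "(\<Sum>k\<in>{i, j}. \<Sum>l\<in>{i, j}. f k l * x k * x l) = x i ^ 2 * (f i i + f j j - 2 * f i j)"
      using \<open>i \<noteq> j\<close> sym by (simp add: algebra_simps power2_eq_square)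
    also have "\<dots> \<le> 0"
      using assms by (intro mult_nonneg_nonpos) auto
    finally show ?thesis .
  qed
  show ?thesis
    using \<open>i \<noteq> j\<close> pos sum equal neg unfolding supports_local_eq_def by auto
qed

lemma Kset_entry_in_upper_half:
  fixes f :: "nat \<Rightarrow> nat \<Rightarrow> real"
  assumes Kset: "is_Kset f I"
    and no_eq: "\<And>J. J \<subset> I \<Longrightarrow> card J \<ge> 2 \<Longrightarrow> \<not> supports_local_eq f J"
    and "card I \<ge> 3" "i \<in> I" "j \<in> I" "i \<noteq> j" "f j i = f i j" "f i i \<in> {0..1}" "f j j \<in> {0..1}"
  shows "f i j \<in> upper_half (f i i) (f j j)"
proof -
  have "(f i i + f j j) / 2 \<le> f i j"
    using Kset assms by (simp add: is_Kset_def)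
  moreover have "f i j \<le> max (f i i) (f j j)"
  proof (rule ccontr)
    assume "\<not> f i j \<le> max (f i i) (f j j)"
    then have "supports_local_eq f {i, j}"
      using assms by (intro supports_local_eq_pair) auto
    moreover have "{i, j} \<subset> I"
      using assms card_mono[of I "{i, j}"] by (cases "finite I") auto
    ultimately show False
      using no_eq \<open>i \<noteq> j\<close> by simp
  qed
  ultimately show ?thesis
    using assms by (simp add: upper_half_def)
qed

lemma sym_mat_commute: "sym_mat \<omega> j i = sym_mat \<omega> i j"
  by (simp add: sym_mat_def min.commute max.commute)

lemma sym_mat_upper: "i \<le> j \<Longrightarrow> sym_mat \<omega> i j = \<omega> (i, j)"
  by (simp add: sym_mat_def)

lemma Kset_subset_upper_half_event:
  fixes \<omega> :: "nat \<times> nat \<Rightarrow> real"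
  assumes Kset: "is_Kset (sym_mat \<omega>) I"
    and no_eq: "\<And>J. J \<subset> I \<Longrightarrow> card J \<ge> 2 \<Longrightarrow> \<not> supports_local_eq (sym_mat \<omega>) J"
    and "3 \<le> r" "r \<le> card I" and diag: "\<And>i. i \<in> I \<Longrightarrow> \<omega> (i, i) \<in> {0..1}"
  obtains I' where "I' \<subseteq> I" "card I' = r" "\<omega> \<in> upper_half_event I'"
proof -
  obtain I' where "I' \<subseteq> I" "card I' = r"
    using obtain_subset_with_card_n[OF \<open>r \<le> card I\<close>] by metis
  have "\<omega> (i, j) \<in> upper_half (\<omega> (i, i)) (\<omega> (j, j))" if "i \<in> I'" "j \<in> I'" "i < j" for i j
  proof -
    have "sym_mat \<omega> i j \<in> upper_half (sym_mat \<omega> i i) (sym_mat \<omega> j j)"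
      using that \<open>I' \<subseteq> I\<close> assms(3,4) diag
      by (intro Kset_entry_in_upper_half[OF Kset no_eq]) (auto simp: sym_mat_commute sym_mat_upper)
    then show ?thesis
      using \<open>i < j\<close> by (simp add: sym_mat_upper)
  qed
  then have "\<omega> \<in> upper_half_event I'"
    by (auto simp: upper_half_event_def offdiag_pairs_def)
  with \<open>I' \<subseteq> I\<close> \<open>card I' = r\<close> show thesis
    by (rule that)
qed

lemma finite_entry_idx: "finite (entry_idx n)"
  unfolding entry_idx_def by (rule finite_subset[of _ "{0..<n} \<times> {0..<n}"]) auto

locale antitone_density_01 =
  fixes g :: "real \<Rightarrow> real"
  assumes vanishes_outside: "\<And>x. x \<notin> {0..1} \<Longrightarrow> g x = 0"
    and antimono: "antimono_on {0..1} g"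
    and prob_space_density: "prob_space (density lborel (\<lambda>x. ennreal (g x)))"
begin

abbreviation law :: "real measure" where
  "law \<equiv> density lborel (\<lambda>x. ennreal (g x))"

lemma borel_measurable_density: "g \<in> borel_measurable borel"
  using vanishes_outside antimono by (rule borel_measurable_antimono_on_vanishing_outside[rotated])

lemma measure_upper_half_le: "measure law (upper_half u v) \<le> 1 / 2"
proof -
  interpret prob_space law
    by (fact prob_space_density)
  have "prob {(u + v) / 2..v} \<le> 1 / 2" if "u \<in> {0..1}" "v \<in> {0..1}" "u \<le> v" for u v
  proof -
    define m where "m = (u + v) / 2"
    have "antimono_on {u..v} g"
      using antimono that by (auto simp: monotone_on_def)
    then have "prob {m..v} \<le> prob {u..m}"
      using emeasure_density_upper_half_le_lower_half[OF borel_measurable_density]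
      by (simp add: m_def emeasure_eq_measure)
    moreover have "prob {m} = 0"
      using borel_measurable_density
      by (simp add: measure_def emeasure_density nn_integral_0_iff_AE AE_lborel_singleton)
    then have "prob {u..m} + prob {m..v} \<le> 1"
    proof -
      have "{u..m} \<inter> {m..v} = {m}" and "{u..m} \<union> {m..v} = {u..v}"
        using \<open>u \<le> v\<close> by (auto simp: m_def)
      then have "prob {u..v} = prob {u..m} + prob {m..v}"
        using measure_Un3[of "{u..m}" law "{m..v}"] \<open>prob {m} = 0\<close>
        by (simp add: fmeasurable_def less_top[symmetric])
      then show ?thesis
        using prob_le_1[of "{u..v}"] by linarith
    qed
    ultimately show ?thesis
      by (simp add: m_def)
  qed
  from this[of u v] this[of v u] show ?thesis
    by (auto simp: upper_half_def max_def add.commute)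
qed

lemma measure_unit_interval: "measure law {0..1} = 1"
proof -
  interpret prob_space law
    by (fact prob_space_density)
  have "emeasure law {0..1} = emeasure law (space law)"
    using borel_measurable_density
    by (simp add: emeasure_density) (auto simp: indicator_def vanishes_outside intro!: nn_integral_cong)
  then show ?thesis
    using prob_space by (simp add: emeasure_eq_measure)
qed

lemma measure_outside_unit_cube:
  assumes "finite K"
  shows "measure (PiM K (\<lambda>_. law)) (space (PiM K (\<lambda>_. law)) - PiE K (\<lambda>_. {0..1})) = 0"
proof -
  interpret product_prob_space "\<lambda>_. law" K
    by (intro product_prob_spaceI prob_space_density)
  have "PiE K (\<lambda>_. {0..1}) \<in> sets (PiM K (\<lambda>_. law))"
    using \<open>finite K\<close> by (intro sets_PiM_I_finite) auto
  moreover have "emeasure (PiM K (\<lambda>_. law)) (PiE K (\<lambda>_. {0..1})) = 1"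
    using \<open>finite K\<close> measure_unit_interval by (simp add: emeasure_PiM M.emeasure_eq_measure)
  ultimately show ?thesis
    by (simp add: P.prob_compl P.emeasure_eq_measure)
qed

lemma upper_half_event_entries_sets:
  assumes "I \<subseteq> {0..<n}"
  shows "space (entries_space g n) \<inter> upper_half_event I \<in> sets (entries_space g n)"
  unfolding entries_space_def using assms finite_subset
  by (intro upper_half_event_sets) (auto simp: entry_idx_def)

lemma measure_upper_half_events_le:
  "measure (entries_space g n) (\<Union>I\<in>{I. I \<subseteq> {0..<n} \<and> card I = r}. space (entries_space g n) \<inter> upper_half_event I)
    \<le> real (n choose r) * (1 / 2) ^ (r choose 2)"
proof -
  let ?S = "{I. I \<subseteq> {0..<n} \<and> card I = r}"
  have "finite ?S"
    by (rule finite_subset[of _ "Pow {0..<n}"]) auto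
  have event_le: "measure (entries_space g n) (space (entries_space g n) \<inter> upper_half_event I)
      \<le> (1 / 2) ^ (r choose 2)" if "I \<in> ?S" for I
  proof -
    have "finite I"
      using that finite_subset by auto
    have "measure (entries_space g n) (space (entries_space g n) \<inter> upper_half_event I)
        \<le> (1 / 2) ^ card (offdiag_pairs I)"
      unfolding entries_space_def using that
      by (intro measure_upper_half_event_le[OF prob_space_density _ finite_entry_idx \<open>finite I\<close>]
          measure_upper_half_le) (auto simp: entry_idx_def)
    then show ?thesis
      using that card_offdiag_pairs[OF \<open>finite I\<close>] by simp
  qed
  have "(\<Sum>I\<in>?S. measure (entries_space g n) (space (entries_space g n) \<inter> upper_half_event I))
      \<le> (\<Sum>I\<in>?S. (1 / 2) ^ (r choose 2))"
    using event_le by (rule sum_mono)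
  moreover have "measure (entries_space g n) (\<Union>I\<in>?S. space (entries_space g n) \<inter> upper_half_event I)
      \<le> (\<Sum>I\<in>?S. measure (entries_space g n) (space (entries_space g n) \<inter> upper_half_event I))"
    using \<open>finite ?S\<close> upper_half_event_entries_sets by (intro measure_UNION_le) auto
  ultimately show ?thesis
    using n_subsets[of "{0..<n}" r] by simp
qed

lemma bad_event_measure_le:
  assumes "3 \<le> r_n n"
  shows "\<exists>A \<in> sets (entries_space g n). bad_event g n \<subseteq> A \<and>
    measure (entries_space g n) A \<le> real (n choose r_n n) * (1 / 2) ^ (r_n n choose 2)"
proof -
  define N where "N = entries_space g n"
  define U where "U = (\<Union>I\<in>{I. I \<subseteq> {0..<n} \<and> card I = r_n n}. space N \<inter> upper_half_event I)"
  define outside where "outside = space N - PiE (entry_idx n) (\<lambda>_. {0..1})"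
  have "U \<in> sets N"
  proof -
    have "finite {I. I \<subseteq> {0..<n} \<and> card I = r_n n}"
      by (rule finite_subset[of _ "Pow {0..<n}"]) auto
    then show ?thesis
      unfolding U_def N_def using upper_half_event_entries_sets by (intro sets.finite_UN) auto
  qed
  moreover have "outside \<in> sets N"
    unfolding outside_def N_def entries_space_def using finite_entry_idx
    by (intro sets.Diff sets.top sets_PiM_I_finite) auto
  moreover have "measure N (U \<union> outside) \<le> real (n choose r_n n) * (1 / 2) ^ (r_n n choose 2)"
    using measure_Un_le[OF \<open>U \<in> sets N\<close> \<open>outside \<in> sets N\<close>] measure_upper_half_events_le[of n "r_n n"]
      measure_outside_unit_cube[OF finite_entry_idx, of n]
    by (simp add: U_def outside_def N_def entries_space_def)
  moreover have "\<omega> \<in> U \<union> outside" if "\<omega> \<in> bad_event g n" for \<omega>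
  proof (cases "\<omega> \<in> PiE (entry_idx n) (\<lambda>_. {0..1})")
    case True
    obtain I where "\<omega> \<in> space N" "I \<subseteq> {0..<n}" "r_n n \<le> card I" and Kset: "is_Kset (sym_mat \<omega>) I"
      and no_eq: "\<And>J. J \<subset> I \<Longrightarrow> 2 \<le> card J \<Longrightarrow> \<not> supports_local_eq (sym_mat \<omega>) J"
      using \<open>\<omega> \<in> bad_event g n\<close> by (auto simp: bad_event_def N_def)
    moreover have "\<omega> (i, i) \<in> {0..1}" if "i \<in> I" for i
      using PiE_mem[OF True, of "(i, i)"] that \<open>I \<subseteq> {0..<n}\<close> by (auto simp: entry_idx_def)
    ultimately obtain I' where "I' \<subseteq> I" "card I' = r_n n" "\<omega> \<in> upper_half_event I'"
      using Kset_subset_upper_half_event[OF Kset no_eq assms] by blast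
    with \<open>\<omega> \<in> space N\<close> \<open>I \<subseteq> {0..<n}\<close> show ?thesis
      by (auto simp: U_def)
  qed (use that in \<open>auto simp: bad_event_def outside_def N_def\<close>)
  ultimately show ?thesis
    unfolding N_def by blast
qed

end

lemma r_n_ge_log: "2 * log 2 (real n) \<le> real (r_n n)"
  unfolding r_n_def by linarith

lemma filterlim_r_n: "filterlim r_n at_top sequentially"
proof -
  have "eventually (\<lambda>n. k \<le> r_n n) sequentially" for k
  proof (rule eventually_sequentiallyI)
    fix n :: nat
    assume "2 ^ k \<le> n"
    then have "real k \<le> log 2 (real n)"
      by (intro le_log_of_power) (simp_all add: numeral_power_le_of_nat_cancel_iff)
    then show "k \<le> r_n n"
      using r_n_ge_log[of n] of_nat_0_le_iff[of k] by linarith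
  qed
  then show ?thesis
    by (simp add: filterlim_at_top)
qed

lemma eventually_power_le_fact: "eventually (\<lambda>r. C ^ r \<le> (fact r :: real)) sequentially"
proof -
  have "(\<lambda>r. inverse (fact r) * C ^ r) \<longlonglongrightarrow> 0"
    by (rule summable_LIMSEQ_zero[OF summable_exp])
  then have "eventually (\<lambda>r. inverse (fact r) * C ^ r < 1) sequentially"
    by (rule order_tendstoD(2)) simp
  then show ?thesis
    by (rule eventually_mono) (simp add: field_simps)
qed

lemma two_mult_choose_two_add: "2 * (r choose 2) + r = r * r"
  by (cases r) (simp_all add: choose_two)

lemma binomial_half_pow_le_powr:
  fixes a :: real
  assumes "a > 0" "n \<ge> 1" and r: "2 * log 2 (real n) \<le> real r"
    and fact_r: "(2 powr ((a + 1) / 2)) ^ r \<le> fact r"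
  shows "real (n choose r) * (1 / 2) ^ (r choose 2) \<le> real n powr - a"
proof -
  have "real n = 2 powr (log 2 (real n))"
    using \<open>n \<ge> 1\<close> by simp
  also have "\<dots> \<le> 2 powr (real r / 2)"
    using r by simp
  finally have n_le: "real n \<le> 2 powr (real r / 2)" .
  have "real (n choose r) * fact r \<le> real n ^ r"
    using binomial_fact_pow[of n r] by (metis of_nat_fact of_nat_le_iff of_nat_mult of_nat_power)
  also have "\<dots> \<le> (2 powr (real r / 2)) ^ r"
    using n_le by (intro power_mono) auto
  also have "\<dots> = 2 powr (real r * real r / 2)"
    by (simp add: powr_power)
  finally have "real (n choose r) \<le> 2 powr (real r * real r / 2) / fact r"
    by (simp add: field_simps)
  have "real (n choose r) * (1 / 2) ^ (r choose 2) = real (n choose r) / 2 powr real (r choose 2)"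
    by (simp add: powr_realpow power_one_over)
  also have "\<dots> \<le> 2 powr (real r * real r / 2) / fact r / 2 powr real (r choose 2)"
    using \<open>real (n choose r) \<le> _\<close> by (rule divide_right_mono) simp
  also have "\<dots> = 2 powr (real r * real r / 2 - real (r choose 2)) / fact r"
    by (simp only: powr_diff divide_divide_eq_left mult.commute)
  also have "real r * real r / 2 - real (r choose 2) = real r / 2"
    using arg_cong[OF two_mult_choose_two_add[of r], of real] by simp
  also have "2 powr (real r / 2) / fact r \<le> real n powr - a"
  proof -
    have "2 powr (real r / 2) * real n powr a \<le> 2 powr (real r / 2) * (2 powr (real r / 2)) powr a"
      using n_le \<open>a > 0\<close> \<open>n \<ge> 1\<close> by (intro mult_left_mono powr_mono2) auto
    also have "\<dots> = 2 powr (real r * ((a + 1) / 2))"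
      by (simp add: powr_powr powr_add[symmetric] algebra_simps add_divide_distrib)
    also have "\<dots> = (2 powr ((a + 1) / 2)) ^ r"
      by (simp add: powr_power)
    finally have "2 powr (real r / 2) * real n powr a \<le> fact r"
      using fact_r by linarith
    moreover have "0 < real n powr a" "(0::real) < fact r"
      using \<open>n \<ge> 1\<close> by auto
    ultimately show ?thesis
      by (simp add: powr_minus_divide field_simps)
  qed
  finally show ?thesis .
qed

lemma eventually_binomial_r_n_le:
  assumes "a > 0"
  shows "eventually (\<lambda>n. real (n choose r_n n) * (1 / 2) ^ (r_n n choose 2) \<le> real n powr - a) sequentially"
proof -
  have "eventually (\<lambda>n. (2 powr ((a + 1) / 2)) ^ r_n n \<le> fact (r_n n)) sequentially"
    using eventually_power_le_fact filterlim_r_n by (rule eventually_compose_filterlim)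
  moreover have "eventually (\<lambda>n. n \<ge> 1) sequentially"
    by (rule eventually_ge_at_top)
  ultimately show ?thesis
    by eventually_elim (rule binomial_half_pow_le_powr[OF assms _ r_n_ge_log])
qed

theorem corollary2p9:
  fixes g :: "real \<Rightarrow> real"
  assumes supp: "\<forall>x. x \<notin> {0..1} \<longrightarrow> g x = 0"
    and pos: "\<forall>x\<in>{0<..<1}. g x > 0"
    and dens: "(g has_integral 1) {0..1}"
    and noninc: "antimono_on {0..1} g"
    and diff: "\<forall>x\<in>{0<..<1}. g differentiable (at x)"
    and hazard: "mono_on {0..<1} (\<lambda>x. g x / (1 - cdf_of g x))"
  shows "\<forall>a > 0. \<forall>\<^sub>F n in sequentially.
           \<exists>A \<in> sets (entries_space g n). bad_event g n \<subseteq> A \<and>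
              measure (entries_space g n) A \<le> real n powr (- a)"
proof (intro allI impI)
  fix a :: real
  assume "a > 0"
  have "prob_space (density lborel (\<lambda>x. ennreal (g x)))"
    using supp pos by (intro prob_space_density_01[OF _ _ dens noninc]) auto
  with supp noninc interpret antitone_density_01 g
    by (intro antitone_density_01.intro) blast+
  have "eventually (\<lambda>n. 3 \<le> r_n n) sequentially"
    using filterlim_r_n by (simp add: filterlim_at_top)
  with eventually_binomial_r_n_le[OF \<open>a > 0\<close>]
  show "\<forall>\<^sub>F n in sequentially. \<exists>A \<in> sets (entries_space g n). bad_event g n \<subseteq> A \<and>
      measure (entries_space g n) A \<le> real n powr (- a)"
  proof eventually_elim
    case (elim n)
    then obtain A where "A \<in> sets (entries_space g n)" "bad_event g n \<subseteq> A"
      and "measure (entries_space g n) A \<le> real (n choose r_n n) * (1 / 2) ^ (r_n n choose 2)"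
      using bad_event_measure_le by blast
    with elim show ?case
      by (meson order_trans)
  qed
qed

end
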